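(* If $(r,s,0,0)\in\mu^{-1}(0)^{rss}$, i.e. $r\in\mathfrak{b}$ has pairwise distinct diagonal entries and $[r,s]\in\mathfrak{n}^+$, then $s$ is diagonal (its lower triangular representative in $\mathfrak{gl}_n/\mathfrak{n}^+$ has all strictly lower entries zero).
   Context: $\mathfrak{b}$: upper triangular complex $n\times n$ matrices; $\mathfrak{n}^+$: strictly upper triangular matrices; $\mathfrak{b}^*=\mathfrak{gl}_n/\mathfrak{n}^+$, identified with lower triangular matrices. $\mu(r,s,i,j)=[r,s]+ij\bmod\mathfrak{n}^+$ on $\mathfrak{b}\times\mathfrak{b}^*\times\mathbb{C}^n\times(\mathbb{C}^n)^*$, and $\mu^{-1}(0)^{rss}$ is the set of zeros of $\mu$ with $r$ having pairwise distinct diagonal entries. *)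

theory Defs
  imports Complex_Main
begin

(* n x n complex matrices represented as functions nat => nat => complex,
   only entries with indices < n are relevant *)
type_synonym cmat = "nat \<Rightarrow> nat \<Rightarrow> complex"

definition mat_mult :: "nat \<Rightarrow> cmat \<Rightarrow> cmat \<Rightarrow> cmat" where
  "mat_mult n A B = (\<lambda>i j. \<Sum>k<n. A i k * B k j)"

definition commutator :: "nat \<Rightarrow> cmat \<Rightarrow> cmat \<Rightarrow> cmat" where
  "commutator n A B = (\<lambda>i j. mat_mult n A B i j - mat_mult n B A i j)"

definition upper_tri :: "nat \<Rightarrow> cmat \<Rightarrow> bool" where
  "upper_tri n A \<longleftrightarrow> (\<forall>i<n. \<forall>j<n. j < i \<longrightarrow> A i j = 0)"

definition strictly_upper_tri :: "nat \<Rightarrow> cmat \<Rightarrow> bool" where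
  "strictly_upper_tri n A \<longleftrightarrow> (\<forall>i<n. \<forall>j<n. j \<le> i \<longrightarrow> A i j = 0)"

(* representatives of b^* = gl_n / n^+ : lower triangular *)
definition lower_tri :: "nat \<Rightarrow> cmat \<Rightarrow> bool" where
  "lower_tri n A \<longleftrightarrow> (\<forall>i<n. \<forall>j<n. i < j \<longrightarrow> A i j = 0)"

definition diagonal_mat :: "nat \<Rightarrow> cmat \<Rightarrow> bool" where
  "diagonal_mat n A \<longleftrightarrow> (\<forall>i<n. \<forall>j<n. i \<noteq> j \<longrightarrow> A i j = 0)"

definition distinct_diag :: "nat \<Rightarrow> cmat \<Rightarrow> bool" where
  "distinct_diag n A \<longleftrightarrow> (\<forall>i<n. \<forall>j<n. i \<noteq> j \<longrightarrow> A i i \<noteq> A j j)"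

end

theory Submission
  imports Defs
begin

text \<open>Let \<open>r\<close> be upper triangular and let \<open>j < i\<close>. The \<open>(i,j)\<close> entry of \<open>[r,s]\<close> is
  \<open>(r\<^sub>i\<^sub>i - r\<^sub>j\<^sub>j) s\<^sub>i\<^sub>j\<close> plus terms involving only entries of \<open>s\<close> strictly below or strictly
  left of \<open>(i,j)\<close>, all of which lie on subdiagonals further from the diagonal. Inducting
  on the distance \<open>i - j\<close> from the outermost subdiagonal inwards, these entries vanish,
  and since \<open>[r,s]\<^sub>i\<^sub>j = 0\<close> and \<open>r\<^sub>i\<^sub>i \<noteq> r\<^sub>j\<^sub>j\<close>, so does \<open>s\<^sub>i\<^sub>j\<close>.\<close>

lemma commutator_upper_tri_entry:
  assumes r: "upper_tri n r" and ij: "j < i" "i < n"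
    and below: "\<And>k. i < k \<Longrightarrow> k < n \<Longrightarrow> s k j = 0"
    and left: "\<And>k. k < j \<Longrightarrow> s i k = 0"
  shows "commutator n r s i j = (r i i - r j j) * s i j"
proof -
  have "mat_mult n r s i j = (\<Sum>k\<in>{i}. r i k * s k j)"
    unfolding mat_mult_def
  proof (rule sum.mono_neutral_right)
    show "\<forall>k\<in>{..<n} - {i}. r i k * s k j = 0"
      using r ij below by (auto simp: upper_tri_def nat_neq_iff)
  qed (use ij in auto)
  moreover have "mat_mult n s r i j = (\<Sum>k\<in>{j}. s i k * r k j)"
    unfolding mat_mult_def
  proof (rule sum.mono_neutral_right)
    show "\<forall>k\<in>{..<n} - {j}. s i k * r k j = 0"
      using r ij left by (auto simp: upper_tri_def nat_neq_iff)
  qed (use ij in auto)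
  ultimately show ?thesis
    by (simp add: commutator_def algebra_simps)
qed

lemma strictly_lower_entries_vanish:
  assumes r: "upper_tri n r" "distinct_diag n r"
    and comm: "strictly_upper_tri n (commutator n r s)"
    and ij: "j < i" "i < n"
  shows "s i j = 0"
  using ij
proof (induction "n - (i - j)" arbitrary: i j rule: less_induct)
  case less
  have "commutator n r s i j = (r i i - r j j) * s i j"
  proof (rule commutator_upper_tri_entry[OF r(1) less.prems])
    show "s k j = 0" if "i < k" "k < n" for k
      using that less by (intro less.hyps) auto
    show "s i k = 0" if "k < j" for k
      using that less by (intro less.hyps) auto
  qed
  moreover have "commutator n r s i j = 0"
    using comm less.prems by (simp add: strictly_upper_tri_def)
  moreover have "r i i \<noteq> r j j"
    using r(2) less.prems by (simp add: distinct_diag_def)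
  ultimately show ?case by simp
qed

theorem mainTheorem15:
  fixes n :: nat and r s :: cmat
  assumes "upper_tri n r"
    and "lower_tri n s"
    and "distinct_diag n r"
    and "strictly_upper_tri n (commutator n r s)"
  shows "diagonal_mat n s"
  unfolding diagonal_mat_def
proof (intro allI impI)
  fix i j assume "i < n" "j < n" "i \<noteq> j"
  then consider "i < j" | "j < i" by linarith
  then show "s i j = 0"
  proof cases
    case 1
    then show ?thesis using assms(2) \<open>i < n\<close> \<open>j < n\<close> by (simp add: lower_tri_def)
  next
    case 2
    then show ?thesis using strictly_lower_entries_vanish assms(1,3,4) \<open>i < n\<close> by blast
  qed
qed

end
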